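(* Let $c_1,\dots,c_m \in \mathbb{R}^{n_y}\setminus\{0\}$, $d_1,\dots,d_m\in\mathbb{R}$, and $p_j(y,w) := \frac{d_j - c_j^\top(y-w)}{\|c_j\|_2}$. Let $G\in\mathbb{R}^{m\times n_y}$ be the matrix with rows $-c_j^\top/\|c_j\|_2$, $g\in\mathbb{R}^m$ the vector with entries $d_j/\|c_j\|_2$, and $e_m\in\mathbb{R}^m$ the all-ones vector. Let the uncertainty set be a nonempty compact convex polytope $\mathbb{W} := \{w\in\mathbb{R}^{n_y}\mid Hw\le h\}$ with $H\in\mathbb{R}^{q\times n_y}$, $h\in\mathbb{R}^q$. Let $\hat w^{(1)},\dots,\hat w^{(N)}\in\mathbb{W}$, $\nu := \frac1N\sum_{i=1}^N\boldsymbol{\delta}_{\hat w^{(i)}}$, $\theta>0$, and $\mathbb{D} := \{\mu\in\mathcal{P}(\mathbb{W})\mid W(\mu,\nu)\le\theta\}$. Then for all $y\in\mathbb{R}^{n_y}$ and $z\in\mathbb{R}$, $$\sup_{\mu\in\mathbb{D}}\mathbb{E}^\mu\Big[\max\big\{\min_{j=1,\dots,m}p_j(y,w)-z,\,-z,\,0\big\}\Big]$$ equals the optimal value of $$\begin{aligned}\inf_{\lambda,s,\rho,\gamma,\eta,\zeta}\ & \lambda\theta + \frac1N\sum_{i=1}^N s_i\\ \text{s.t. }& \langle\rho_i, G(y-\hat w^{(i)})+g\rangle + \langle\gamma_i, h - H\hat w^{(i)}\rangle \le s_i + z,\\ & \langle \eta_i, h-H\hat w^{(i)}\rangle \le s_i+z,\\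 & \langle \zeta_i, h-H\hat w^{(i)}\rangle \le s_i,\\ & \|H^\top\gamma_i + G^\top\rho_i\|_*\le\lambda,\quad \|H^\top\eta_i\|_*\le\lambda,\quad \|H^\top\zeta_i\|_*\le\lambda,\\ & \langle\rho_i,e_m\rangle = 1,\quad \gamma_i\ge0,\ \rho_i\ge0,\ \eta_i\ge0,\ \zeta_i\ge0,\end{aligned}$$ where all constraints hold for $i=1,\dots,N$, with variables $\lambda\in\mathbb{R}$, $s\in\mathbb{R}^N$, $\rho_i\in\mathbb{R}^m$, $\gamma_i,\eta_i,\zeta_i\in\mathbb{R}^q$.
   Context: $\mathcal{P}(\mathbb{W})$ is the set of Borel probability measures on $\mathbb{W}$; $\boldsymbol{\delta}_w$ is the Dirac measure at $w$; in the expectation, $w$ is distributed according to $\mu$. The Wasserstein distance is $W(\mu,\nu) := \min_{\kappa\in\mathcal{P}(\mathbb{W}^2)}\{\int_{\mathbb{W}^2}\|w-w'\|\,\mathrm{d}\kappa(w,w') \mid \Pi^1\kappa=\mu,\ \Pi^2\kappa=\nu\}$, where $\Pi^i\kappa$ is the $i$th marginal and $\|\cdot\|$ is an arbitrary norm on $\mathbb{R}^{n_y}$; $\|\cdot\|_*$ is its dual norm, $\|v\|_* := \sup_{\|\xi\|\le1}\langle v,\xi\rangle$. Vector inequalities are componentwise. *)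

theory Defs
  imports "HOL-Probability.Probability"
begin

definition is_norm :: "('a::real_vector \<Rightarrow> real) \<Rightarrow> bool" where
  "is_norm nrm \<longleftrightarrow> (\<forall>x. nrm x = 0 \<longleftrightarrow> x = 0) \<and>
     (\<forall>a x. nrm (a *\<^sub>R x) = \<bar>a\<bar> * nrm x) \<and>
     (\<forall>x y. nrm (x + y) \<le> nrm x + nrm y)"

definition dual_norm :: "('a::real_inner \<Rightarrow> real) \<Rightarrow> 'a \<Rightarrow> real" where
  "dual_norm nrm v = Sup {inner v \<xi> | \<xi>. nrm \<xi> \<le> 1}"

text \<open>Borel probability measures supported on the set W (identified with P(W)).\<close>
definition prob_measures_on :: "'a::euclidean_space set \<Rightarrow> 'a measure set" where
  "prob_measures_on W = {\<mu>. sets \<mu> = sets borel \<and> prob_space \<mu> \<and> emeasure \<mu> W = 1}"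

definition couplings :: "'a::euclidean_space measure \<Rightarrow> 'a measure \<Rightarrow> ('a \<times> 'a) measure set" where
  "couplings \<mu> \<nu> = {\<kappa>. sets \<kappa> = sets borel \<and> prob_space \<kappa> \<and>
      distr \<kappa> borel fst = \<mu> \<and> distr \<kappa> borel snd = \<nu>}"

definition wasserstein :: "('a::euclidean_space \<Rightarrow> real) \<Rightarrow> 'a measure \<Rightarrow> 'a measure \<Rightarrow> ennreal" where
  "wasserstein nrm \<mu> \<nu> =
     (INF \<kappa>\<in>couplings \<mu> \<nu>. \<integral>\<^sup>+ p. ennreal (nrm (fst p - snd p)) \<partial>\<kappa>)"

text \<open>Empirical measure (1/N) sum_i delta_(what i), samples indexed by a finite type.\<close>
definition empirical_measure :: "('k::finite \<Rightarrow> 'a::euclidean_space) \<Rightarrow> 'a measure" where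
  "empirical_measure what = distr (uniform_measure (count_space UNIV) UNIV) borel what"

end

(* For any continuous loss L on the compact set W, the worst-case expectation over the Wasserstein
   ball equals inf over lam >= 0 of lam theta + (1/N) sum_i max_{w in W} (L w - lam nrm (w - what_i)).
   The upper bound holds because the pointwise inequality L w <= s_i + lam nrm (w - what_i) integrates
   along a near-optimal coupling. For the lower bound, measures that move each sample to one of two
   points already suffice, and a one-dimensional Lagrange multiplier for the budget theta closes
   the gap.

   For the piecewise affine loss, each inner maximum is a convex problem over the polytope W, and
   its LP dual, obtained from a separating hyperplane, is the system of constraints on rho_i, gamma_i
   (for the piece min_j p_j - z) and eta_i, zeta_i (for the constant pieces -z and 0); boundedness
   of W rules out the degenerate separation. *)

theory Submission
  imports Defs
begin

section \<open>Norms and dual norms\<close>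

lemma is_norm_zero: "is_norm nrm \<Longrightarrow> nrm 0 = 0"
  unfolding is_norm_def by auto

lemma is_norm_eq_0_iff: "is_norm nrm \<Longrightarrow> nrm x = 0 \<longleftrightarrow> x = 0"
  unfolding is_norm_def by auto

lemma is_norm_scaleR: "is_norm nrm \<Longrightarrow> nrm (a *\<^sub>R x) = \<bar>a\<bar> * nrm x"
  unfolding is_norm_def by blast

lemma is_norm_triangle: "is_norm nrm \<Longrightarrow> nrm (x + y) \<le> nrm x + nrm y"
  unfolding is_norm_def by blast

lemma is_norm_minus: "is_norm nrm \<Longrightarrow> nrm (- x) = nrm x"
  using is_norm_scaleR[of nrm "-1" x] by simp

lemma is_norm_nonneg: "is_norm nrm \<Longrightarrow> 0 \<le> nrm x"
  using is_norm_triangle[of nrm x "- x"] is_norm_zero[of nrm] is_norm_minus[of nrm x] by simp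

lemma is_norm_diff_triangle: "is_norm nrm \<Longrightarrow> nrm (x - z) \<le> nrm (x - y) + nrm (y - z)"
  using is_norm_triangle[of nrm "x - y" "y - z"] by simp

lemma is_norm_sum:
  assumes "is_norm nrm"
  shows "nrm (sum f A) \<le> (\<Sum>i\<in>A. nrm (f i))"
proof (induction A rule: infinite_finite_induct)
  case (insert a A)
  then show ?case using is_norm_triangle[OF assms, of "f a" "sum f A"] by simp
qed (simp_all add: is_norm_zero[OF assms])

lemma convex_on_is_norm:
  assumes "is_norm nrm"
  shows "convex_on UNIV nrm"
  unfolding convex_on_def
proof (intro conjI convex_UNIV ballI allI impI)
  fix x y :: 'a and u v :: real
  assume "0 \<le> u" "0 \<le> v"
  then show "nrm (u *\<^sub>R x + v *\<^sub>R y) \<le> u * nrm x + v * nrm y"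
    using is_norm_triangle[OF assms, of "u *\<^sub>R x" "v *\<^sub>R y"] by (simp add: is_norm_scaleR[OF assms])
qed

lemma convex_strict_sublevel:
  assumes "convex_on UNIV f"
  shows "convex {x. f x < c}"
proof (rule convexI)
  fix x y and u v :: real assume "x \<in> {x. f x < c}" "y \<in> {x. f x < c}" "0 \<le> u" "0 \<le> v" "u + v = 1"
  then show "u *\<^sub>R x + v *\<^sub>R y \<in> {x. f x < c}"
    using convex_lower[OF assms, of x y u v] by simp
qed

lemma convex_sublevel:
  assumes "convex_on UNIV f"
  shows "convex {x. f x \<le> c}"
proof (rule convexI)
  fix x y and u v :: real assume "x \<in> {x. f x \<le> c}" "y \<in> {x. f x \<le> c}" "0 \<le> u" "0 \<le> v" "u + v = 1"
  then show "u *\<^sub>R x + v *\<^sub>R y \<in> {x. f x \<le> c}"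
    using convex_lower[OF assms, of x y u v] by simp
qed

lemma is_norm_le_norm:
  fixes nrm :: "'a::euclidean_space \<Rightarrow> real"
  assumes nrm: "is_norm nrm"
  obtains C where "C > 0" "\<And>x. nrm x \<le> C * norm x"
proof
  define C where "C = (\<Sum>b\<in>Basis. nrm b) + 1"
  show "C > 0"
    unfolding C_def using is_norm_nonneg[OF nrm] by (simp add: sum_nonneg add_nonneg_pos)
  fix x :: 'a
  have "nrm x = nrm (\<Sum>b\<in>Basis. (x \<bullet> b) *\<^sub>R b)"
    by (simp add: euclidean_representation)
  also have "\<dots> \<le> (\<Sum>b\<in>Basis. \<bar>x \<bullet> b\<bar> * nrm b)"
    by (rule order_trans[OF is_norm_sum[OF nrm]]) (simp add: is_norm_scaleR[OF nrm])
  also have "\<dots> \<le> (\<Sum>b\<in>Basis. norm x * nrm b)"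
    by (intro sum_mono mult_right_mono) (auto simp: Basis_le_norm is_norm_nonneg[OF nrm])
  also have "\<dots> \<le> C * norm x"
    unfolding C_def by (simp add: sum_distrib_left[symmetric] algebra_simps)
  finally show "nrm x \<le> C * norm x" .
qed

lemma is_norm_continuous_on:
  fixes nrm :: "'a::euclidean_space \<Rightarrow> real"
  assumes nrm: "is_norm nrm"
  shows "continuous_on S nrm"
proof -
  obtain C where C: "C > 0" "\<And>x. nrm x \<le> C * norm x"
    using is_norm_le_norm[OF nrm] by blast
  have "\<bar>nrm x - nrm y\<bar> \<le> C * dist x y" for x y
  proof -
    have "nrm x \<le> nrm (x - y) + nrm y" "nrm y \<le> nrm (y - x) + nrm x"
      using is_norm_triangle[OF nrm, of "x - y" y] is_norm_triangle[OF nrm, of "y - x" x] by simp_all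
    moreover have "nrm (x - y) \<le> C * dist x y" "nrm (y - x) \<le> C * dist x y"
      using C(2)[of "x - y"] C(2)[of "y - x"] by (simp_all add: dist_norm norm_minus_commute)
    ultimately show ?thesis
      by linarith
  qed
  then have "C-lipschitz_on S nrm"
    using C(1) by (intro lipschitz_onI) (auto simp: dist_real_def)
  then show ?thesis
    by (rule lipschitz_on_continuous_on)
qed

lemma is_norm_ge_norm:
  fixes nrm :: "'a::euclidean_space \<Rightarrow> real"
  assumes nrm: "is_norm nrm"
  obtains c where "c > 0" "\<And>x. c * norm x \<le> nrm x"
proof -
  obtain u where u: "u \<in> sphere 0 1" "\<And>x. x \<in> sphere 0 1 \<Longrightarrow> nrm u \<le> nrm x"
    using continuous_attains_inf[OF compact_sphere _ is_norm_continuous_on[OF nrm], of 0 1]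
    by (auto simp: sphere_eq_empty)
  have "nrm u > 0"
    using u(1) is_norm_nonneg[OF nrm, of u] is_norm_eq_0_iff[OF nrm, of u] by fastforce
  moreover have "nrm u * norm x \<le> nrm x" for x
  proof (cases "x = 0")
    case False
    then have "nrm u \<le> nrm ((1 / norm x) *\<^sub>R x)"
      by (intro u(2)) simp
    then show ?thesis
      using False by (simp add: is_norm_scaleR[OF nrm] field_simps)
  qed (simp add: is_norm_zero[OF nrm])
  ultimately show ?thesis
    using that by blast
qed

lemma bdd_above_dual_norm_set:
  fixes nrm :: "'a::euclidean_space \<Rightarrow> real"
  assumes nrm: "is_norm nrm"
  shows "bdd_above {inner v \<xi> | \<xi>. nrm \<xi> \<le> 1}"
proof -
  obtain c where c: "c > 0" "\<And>x. c * norm x \<le> nrm x"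
    using is_norm_ge_norm[OF nrm] by blast
  have "inner v \<xi> \<le> norm v / c" if "nrm \<xi> \<le> 1" for \<xi>
  proof -
    have "inner v \<xi> \<le> norm v * norm \<xi>"
      by (rule norm_cauchy_schwarz)
    also have "\<dots> \<le> norm v * (1 / c)"
      using c(2)[of \<xi>] that c(1) by (intro mult_left_mono) (simp_all add: field_simps)
    finally show ?thesis
      by simp
  qed
  then show ?thesis
    by (auto intro: bdd_aboveI[where M = "norm v / c"])
qed

lemma inner_le_dual_norm:
  fixes nrm :: "'a::euclidean_space \<Rightarrow> real"
  assumes "is_norm nrm" "nrm \<xi> \<le> 1"
  shows "inner v \<xi> \<le> dual_norm nrm v"
  unfolding dual_norm_def using assms by (intro cSup_upper bdd_above_dual_norm_set) auto

lemma dual_norm_le: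
  fixes nrm :: "'a::euclidean_space \<Rightarrow> real"
  assumes "is_norm nrm" "\<And>\<xi>. nrm \<xi> \<le> 1 \<Longrightarrow> inner v \<xi> \<le> M"
  shows "dual_norm nrm v \<le> M"
  unfolding dual_norm_def using assms is_norm_zero[OF assms(1)]
  by (intro cSup_least) (auto intro!: exI[of _ 0])

lemma dual_norm_nonneg:
  fixes nrm :: "'a::euclidean_space \<Rightarrow> real"
  assumes "is_norm nrm"
  shows "0 \<le> dual_norm nrm v"
  using inner_le_dual_norm[OF assms, of 0 v] is_norm_zero[OF assms] by simp

lemma dual_norm_zero:
  fixes nrm :: "'a::euclidean_space \<Rightarrow> real"
  assumes "is_norm nrm"
  shows "dual_norm nrm 0 = 0"
  using dual_norm_le[OF assms, of 0 0] dual_norm_nonneg[OF assms, of 0] by simp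

lemma inner_le_dual_norm_mult:
  fixes nrm :: "'a::euclidean_space \<Rightarrow> real"
  assumes nrm: "is_norm nrm"
  shows "inner v \<xi> \<le> dual_norm nrm v * nrm \<xi>"
proof (cases "\<xi> = 0")
  case False
  then have pos: "nrm \<xi> > 0"
    using is_norm_nonneg[OF nrm, of \<xi>] is_norm_eq_0_iff[OF nrm, of \<xi>] by linarith
  then have "inner v ((1 / nrm \<xi>) *\<^sub>R \<xi>) \<le> dual_norm nrm v"
    by (intro inner_le_dual_norm[OF nrm]) (simp add: is_norm_scaleR[OF nrm])
  then show ?thesis
    using pos by (simp add: field_simps)
qed (simp add: is_norm_zero[OF nrm])

lemma neg_inner_le_dual_norm:
  fixes nrm :: "'a::euclidean_space \<Rightarrow> real"
  assumes "is_norm nrm" "dual_norm nrm v \<le> lam"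
  shows "- inner v u \<le> lam * nrm u"
proof -
  have "- inner v u \<le> dual_norm nrm v * nrm u"
    using inner_le_dual_norm_mult[OF assms(1), of v "- u"] by (simp add: is_norm_minus[OF assms(1)])
  also have "\<dots> \<le> lam * nrm u"
    using assms by (intro mult_right_mono is_norm_nonneg)
  finally show ?thesis .
qed

lemma convex_on_dual_norm:
  fixes nrm :: "'a::euclidean_space \<Rightarrow> real"
  assumes nrm: "is_norm nrm"
  shows "convex_on UNIV (dual_norm nrm)"
  unfolding convex_on_def
proof (intro conjI convex_UNIV ballI allI impI)
  fix x y :: 'a and u v :: real
  assume uv: "0 \<le> u" "0 \<le> v"
  show "dual_norm nrm (u *\<^sub>R x + v *\<^sub>R y) \<le> u * dual_norm nrm x + v * dual_norm nrm y"
  proof (rule dual_norm_le[OF nrm])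
    fix \<xi> :: 'a assume "nrm \<xi> \<le> 1"
    then have "inner x \<xi> \<le> dual_norm nrm x" "inner y \<xi> \<le> dual_norm nrm y"
      using inner_le_dual_norm[OF nrm] by auto
    then show "inner (u *\<^sub>R x + v *\<^sub>R y) \<xi> \<le> u * dual_norm nrm x + v * dual_norm nrm y"
      using uv by (simp add: inner_add_left add_mono mult_left_mono)
  qed
qed

lemma dual_norm_scaleR_le:
  fixes nrm :: "'a::euclidean_space \<Rightarrow> real"
  assumes nrm: "is_norm nrm"
  shows "dual_norm nrm (a *\<^sub>R x) \<le> \<bar>a\<bar> * dual_norm nrm x"
proof (rule dual_norm_le[OF nrm])
  fix \<xi> :: 'a assume "nrm \<xi> \<le> 1"
  have "inner (a *\<^sub>R x) \<xi> = inner x (a *\<^sub>R \<xi>)"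
    by simp
  also have "\<dots> \<le> dual_norm nrm x * (\<bar>a\<bar> * nrm \<xi>)"
    using inner_le_dual_norm_mult[OF nrm, of x "a *\<^sub>R \<xi>"] by (simp add: is_norm_scaleR[OF nrm])
  also have "\<dots> \<le> \<bar>a\<bar> * dual_norm nrm x"
    using \<open>nrm \<xi> \<le> 1\<close> dual_norm_nonneg[OF nrm, of x]
    by (simp add: mult_left_le mult_left_mono mult.left_commute)
  finally show "inner (a *\<^sub>R x) \<xi> \<le> \<bar>a\<bar> * dual_norm nrm x" .
qed

lemma dual_norm_norming_functional:
  fixes nrm :: "'a::euclidean_space \<Rightarrow> real"
  assumes nrm: "is_norm nrm"
  obtains x where "dual_norm nrm x \<le> 1" "inner x u = nrm u"
proof (cases "u = 0")
  case True
  then show ?thesis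
    using that[of 0] dual_norm_zero[OF nrm] is_norm_zero[OF nrm] by simp
next
  case False
  define e where "e = (1 / nrm u) *\<^sub>R u"
  have "nrm u > 0"
    using False is_norm_nonneg[OF nrm, of u] is_norm_eq_0_iff[OF nrm, of u] by linarith
  then have e: "nrm e = 1" "u = nrm u *\<^sub>R e"
    unfolding e_def by (simp_all add: is_norm_scaleR[OF nrm])
  have "convex {\<xi>. nrm \<xi> < 1}"
    by (rule convex_strict_sublevel[OF convex_on_is_norm[OF nrm]])
  moreover have "0 \<in> {\<xi>. nrm \<xi> < 1}"
    by (simp add: is_norm_zero[OF nrm])
  ultimately obtain a b where ab: "a \<noteq> 0" "\<And>\<xi>. nrm \<xi> < 1 \<Longrightarrow> inner a \<xi> \<le> b" "b \<le> inner a e"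
    using separating_hyperplane_sets[of "{\<xi>. nrm \<xi> < 1}" "{e}"] e(1) by auto
  have a_le: "inner a \<xi> \<le> b" if "nrm \<xi> \<le> 1" for \<xi>
  proof (rule field_le_mult_one_interval)
    fix t :: real assume "0 < t" "t < 1"
    have "nrm (t *\<^sub>R \<xi>) = t * nrm \<xi>"
      using \<open>0 < t\<close> by (simp add: is_norm_scaleR[OF nrm])
    also have "\<dots> < 1"
      using mult_left_le[OF that, of t] \<open>0 < t\<close> \<open>t < 1\<close> by linarith
    finally have "nrm (t *\<^sub>R \<xi>) < 1" .
    then show "t * inner a \<xi> \<le> b"
      using ab(2) by fastforce
  qed
  obtain C where C: "C > 0" "\<And>x. nrm x \<le> C * norm x"
    using is_norm_le_norm[OF nrm] by blast
  have "0 < inner a ((1 / (C * norm a)) *\<^sub>R a)"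
    using ab(1) C(1) by simp
  also have "\<dots> \<le> b"
    using C ab(1) by (intro a_le) (simp add: is_norm_scaleR[OF nrm])
  finally have ae_pos: "inner a e > 0"
    using ab(3) by linarith
  show ?thesis
  proof
    show "dual_norm nrm ((1 / inner a e) *\<^sub>R a) \<le> 1"
      using a_le ab(3) ae_pos by (intro dual_norm_le[OF nrm]) (force simp: field_simps)
    show "inner ((1 / inner a e) *\<^sub>R a) u = nrm u"
      using ae_pos by (subst e(2)) simp
  qed
qed

section \<open>Couplings and the empirical measure\<close>

lemma AE_in_prob_measures_on:
  assumes "\<mu> \<in> prob_measures_on W" "W \<in> sets borel"
  shows "AE x in \<mu>. x \<in> W"
proof -
  have sets: "sets \<mu> = sets borel" and "prob_space \<mu>" and "emeasure \<mu> W = 1"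
    using assms(1) unfolding prob_measures_on_def by auto
  moreover have "space \<mu> = UNIV"
    using sets_eq_imp_space_eq[OF sets] by simp
  ultimately show ?thesis
    using assms(2) by (subst prob_space.AE_iff_emeasure_eq_1) (auto simp: measurable_cong_sets[OF sets refl])
qed

lemma integrable_prob_measures_on:
  fixes L :: "'a::euclidean_space \<Rightarrow> real"
  assumes "\<mu> \<in> prob_measures_on W" "compact W" "continuous_on UNIV L"
  shows "integrable \<mu> L"
proof -
  have sets: "sets \<mu> = sets borel" and "prob_space \<mu>"
    using assms(1) unfolding prob_measures_on_def by auto
  then interpret prob_space \<mu> by simp
  obtain B where "\<And>w. w \<in> W \<Longrightarrow> norm (L w) \<le> B"
    using compact_imp_bounded[OF compact_continuous_image[OF continuous_on_subset[OF assms(3)] assms(2)]]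
    unfolding bounded_iff by blast
  moreover have "AE x in \<mu>. x \<in> W"
    by (rule AE_in_prob_measures_on[OF assms(1) borel_closed[OF compact_imp_closed[OF assms(2)]]])
  ultimately show ?thesis
    using assms(3) by (intro integrable_const_bound[where B = B])
      (auto simp: measurable_cong_sets[OF sets refl] borel_measurable_continuous_onI elim: AE_mp)
qed

lemma couplingD:
  assumes "\<kappa> \<in> couplings \<mu> \<nu>"
  shows "sets \<kappa> = sets borel" "prob_space \<kappa>" "distr \<kappa> borel fst = \<mu>" "distr \<kappa> borel snd = \<nu>"
  using assms unfolding couplings_def by auto

lemma coupling_measurable:
  assumes "\<kappa> \<in> couplings \<mu> \<nu>" "f \<in> borel_measurable borel"
  shows "f \<in> borel_measurable \<kappa>"
  using assms measurable_cong_sets[OF couplingD(1)[OF assms(1)] refl] by blast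

lemma
  fixes \<kappa> :: "('a::euclidean_space \<times> 'a) measure"
  assumes "\<kappa> \<in> couplings \<mu> \<nu>"
  shows coupling_measurable_fst: "fst \<in> measurable \<kappa> borel"
    and coupling_measurable_snd: "snd \<in> measurable \<kappa> borel"
  by (auto intro!: coupling_measurable[OF assms] borel_measurable_continuous_onI
      continuous_on_fst continuous_on_snd continuous_on_id)

lemma integral_le_coupling:
  fixes L T :: "'a::euclidean_space \<Rightarrow> real"
  assumes \<kappa>: "\<kappa> \<in> couplings \<mu> \<nu>" and W: "AE w in \<mu>. w \<in> W" "W \<in> sets borel"
    and L: "L \<in> borel_measurable borel" "integrable \<mu> L"
    and T: "T \<in> borel_measurable borel" "integrable \<nu> T"
    and c: "integrable \<kappa> c"
    and le: "\<And>w v. w \<in> W \<Longrightarrow> L w \<le> T v + c (w, v)"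
  shows "integral\<^sup>L \<mu> L \<le> integral\<^sup>L \<nu> T + integral\<^sup>L \<kappa> c"
proof -
  note fst = coupling_measurable_fst[OF \<kappa>] and snd = coupling_measurable_snd[OF \<kappa>]
  note marginals = couplingD(3,4)[OF \<kappa>]
  have intL: "integrable \<kappa> (\<lambda>p. L (fst p))"
    using L(2) integrable_distr_eq[OF fst L(1)] marginals(1) by simp
  have intT: "integrable \<kappa> (\<lambda>p. T (snd p))"
    using T(2) integrable_distr_eq[OF snd T(1)] marginals(2) by simp
  have "AE w in distr \<kappa> borel fst. w \<in> W"
    unfolding marginals(1) by (rule W(1))
  then have "AE p in \<kappa>. fst p \<in> W"
    using W(2) by (subst (asm) AE_distr_iff[OF fst]) auto
  then have "(\<integral>p. L (fst p) \<partial>\<kappa>) \<le> (\<integral>p. T (snd p) + c p \<partial>\<kappa>)"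
    using le by (intro integral_mono_AE intL Bochner_Integration.integrable_add[OF intT c]) (auto elim!: AE_mp)
  then show ?thesis
    using integral_distr[OF fst L(1)] integral_distr[OF snd T(1)] marginals intT c by simp
qed

lemma is_norm_diff_borel_measurable:
  fixes nrm :: "'a::euclidean_space \<Rightarrow> real"
  assumes "is_norm nrm"
  shows "(\<lambda>p. nrm (fst p - snd p)) \<in> borel_measurable borel"
  by (intro borel_measurable_continuous_onI continuous_on_compose2[OF is_norm_continuous_on[OF assms]]
      continuous_intros) auto

lemma wasserstein_less_obtain_coupling:
  fixes nrm :: "'a::euclidean_space \<Rightarrow> real"
  assumes nrm: "is_norm nrm" and less: "wasserstein nrm \<mu> \<nu> < ennreal r"
  obtains \<kappa> where "\<kappa> \<in> couplings \<mu> \<nu>" "integrable \<kappa> (\<lambda>p. nrm (fst p - snd p))"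
    "(\<integral>p. nrm (fst p - snd p) \<partial>\<kappa>) < r"
proof -
  obtain \<kappa> where \<kappa>: "\<kappa> \<in> couplings \<mu> \<nu>"
    and cost: "(\<integral>\<^sup>+ p. ennreal (nrm (fst p - snd p)) \<partial>\<kappa>) < ennreal r"
    using less unfolding wasserstein_def by (auto simp: INF_less_iff)
  have meas: "(\<lambda>p. nrm (fst p - snd p)) \<in> borel_measurable \<kappa>"
    by (rule coupling_measurable[OF \<kappa> is_norm_diff_borel_measurable[OF nrm]])
  have "integrable \<kappa> (\<lambda>p. nrm (fst p - snd p))"
    using meas order.strict_trans[OF cost ennreal_less_top]
    by (intro integrableI_bounded) (auto simp: is_norm_nonneg[OF nrm])
  moreover have "(\<integral>p. nrm (fst p - snd p) \<partial>\<kappa>) < r"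
  proof -
    have "(\<integral>p. nrm (fst p - snd p) \<partial>\<kappa>) = enn2real (\<integral>\<^sup>+ p. ennreal (nrm (fst p - snd p)) \<partial>\<kappa>)"
      using meas by (intro integral_eq_nn_integral) (auto simp: is_norm_nonneg[OF nrm])
    then show ?thesis
      using cost by (cases "\<integral>\<^sup>+ p. ennreal (nrm (fst p - snd p)) \<partial>\<kappa>") (auto simp: ennreal_less_iff)
  qed
  ultimately show ?thesis
    using that \<kappa> by blast
qed

lemma empirical_measure_eq_distr_pmf:
  fixes what :: "'k::finite \<Rightarrow> 'a::euclidean_space"
  shows "empirical_measure what = distr (measure_pmf (pmf_of_set UNIV)) borel what"
proof -
  have "uniform_measure (count_space UNIV) UNIV = measure_pmf (pmf_of_set (UNIV :: 'k::finite set))"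
    by (rule measure_eqI) (simp_all add: emeasure_pmf_of_set divide_ennreal ennreal_of_nat_eq_real_of_nat)
  then show ?thesis
    unfolding empirical_measure_def by simp
qed

definition sample_average :: "('k::finite \<Rightarrow> real) \<Rightarrow> real" where
  "sample_average f = (1 / real CARD('k)) * (\<Sum>i\<in>UNIV. f i)"

lemma sample_average_add_const: "sample_average (\<lambda>i. f i + c) = sample_average f + c"
  unfolding sample_average_def by (simp add: sum.distrib field_simps)

lemma sample_average_mono: "(\<And>i. f i \<le> g i) \<Longrightarrow> sample_average f \<le> sample_average g"
  unfolding sample_average_def by (intro mult_left_mono sum_mono) auto

lemma
  fixes what :: "'k::finite \<Rightarrow> 'a::euclidean_space" and f :: "'a \<Rightarrow> real"
  assumes "f \<in> borel_measurable borel"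
  shows integrable_empirical_measure: "integrable (empirical_measure what) f"
    and integral_empirical_measure: "integral\<^sup>L (empirical_measure what) f = sample_average (\<lambda>i. f (what i))"
proof -
  have what: "what \<in> measurable (measure_pmf (pmf_of_set UNIV)) borel"
    by simp
  show "integrable (empirical_measure what) f"
    unfolding empirical_measure_eq_distr_pmf integrable_distr_eq[OF what assms]
    by (rule integrable_measure_pmf_finite) simp
  have "integral\<^sup>L (empirical_measure what) f = (\<Sum>i\<in>UNIV. f (what i) * pmf (pmf_of_set UNIV) i)"
    unfolding empirical_measure_eq_distr_pmf integral_distr[OF what assms]
    by (rule integral_measure_pmf_real) auto
  then show "integral\<^sup>L (empirical_measure what) f = sample_average (\<lambda>i. f (what i))"
    unfolding sample_average_def by (simp add: sum_distrib_left mult.commute)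
qed

section \<open>Duality for a continuous loss on a compact set\<close>

lemma continuous_on_MIN:
  fixes f :: "'i \<Rightarrow> 'a::topological_space \<Rightarrow> 'b::linorder_topology"
  assumes "finite I" "I \<noteq> {}" "\<And>i. i \<in> I \<Longrightarrow> continuous_on S (f i)"
  shows "continuous_on S (\<lambda>x. MIN i\<in>I. f i x)"
  using assms
proof (induction I rule: finite_ne_induct)
  case (insert a I)
  then show ?case
    by (simp add: continuous_on_min)
qed simp

lemma le_inf_convolution:
  fixes what :: "'k::finite \<Rightarrow> 'a::real_vector"
  assumes nrm: "is_norm nrm" and lam: "0 \<le> lam" and w: "w \<in> W"
    and le: "\<And>w i. w \<in> W \<Longrightarrow> L w \<le> s i + lam * nrm (w - what i)"
  shows "L w \<le> (MIN i. s i + lam * nrm (v - what i)) + lam * nrm (w - v)"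
proof -
  have "L w - lam * nrm (w - v) \<le> s i + lam * nrm (v - what i)" for i
  proof -
    have "lam * nrm (w - what i) \<le> lam * nrm (w - v) + lam * nrm (v - what i)"
      using mult_left_mono[OF is_norm_diff_triangle[OF nrm, of w "what i" v] lam] by (simp add: distrib_left)
    then show ?thesis
      using le[OF w, of i] by linarith
  qed
  then have "L w - lam * nrm (w - v) \<le> (MIN i. s i + lam * nrm (v - what i))"
    by (subst Min_ge_iff) auto
  then show ?thesis
    by linarith
qed

text \<open>s is replaced by its inf-convolution T with lam nrm, which is continuous and still dominates L
  up to the transport cost.\<close>

lemma integral_le_wasserstein_dual:
  fixes what :: "'k::finite \<Rightarrow> 'a::euclidean_space" and L :: "'a \<Rightarrow> real"
  assumes nrm: "is_norm nrm" and W: "compact W"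
    and \<mu>: "\<mu> \<in> prob_measures_on W" "wasserstein nrm \<mu> (empirical_measure what) \<le> ennreal \<theta>"
    and L: "continuous_on UNIV L" and \<theta>: "0 \<le> \<theta>" and lam: "0 \<le> lam"
    and le: "\<And>w i. w \<in> W \<Longrightarrow> L w \<le> s i + lam * nrm (w - what i)"
  shows "integral\<^sup>L \<mu> L \<le> lam * \<theta> + sample_average s"
proof (rule field_le_epsilon)
  fix e :: real assume "0 < e"
  define T where "T v = (MIN i. s i + lam * nrm (v - what i))" for v
  have T: "T \<in> borel_measurable borel"
    unfolding T_def by (intro borel_measurable_continuous_onI continuous_on_MIN continuous_intros
        continuous_on_compose2[OF is_norm_continuous_on[OF nrm]]) auto
  have T_what: "T (what i) \<le> s i" for i
  proof -
    have "T (what i) \<le> s i + lam * nrm (what i - what i)"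
      unfolding T_def by (rule Min_le) (simp, rule rangeI)
    then show ?thesis
      by (simp add: is_norm_zero[OF nrm])
  qed
  have LT: "L w \<le> T v + lam * nrm (w - v)" if "w \<in> W" for w v
    unfolding T_def using le_inf_convolution[OF nrm lam that le] .
  have "wasserstein nrm \<mu> (empirical_measure what) < ennreal (\<theta> + e / (lam + 1))"
    using \<mu>(2) \<theta> lam \<open>0 < e\<close> by (auto intro: le_less_trans ennreal_lessI)
  then obtain \<kappa> where \<kappa>: "\<kappa> \<in> couplings \<mu> (empirical_measure what)"
    and cost: "integrable \<kappa> (\<lambda>p. nrm (fst p - snd p))" "(\<integral>p. nrm (fst p - snd p) \<partial>\<kappa>) < \<theta> + e / (lam + 1)"
    using wasserstein_less_obtain_coupling[OF nrm] by blast
  have "integral\<^sup>L \<mu> L \<le> integral\<^sup>L (empirical_measure what) T + (\<integral>p. lam * nrm (fst p - snd p) \<partial>\<kappa>)"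
    using LT W by (intro integral_le_coupling[OF \<kappa> AE_in_prob_measures_on[OF \<mu>(1)]]
        borel_measurable_continuous_onI integrable_prob_measures_on[OF \<mu>(1)] L
        integrable_empirical_measure T integrable_mult_right cost(1))
      (auto simp: compact_imp_closed)
  also have "integral\<^sup>L (empirical_measure what) T \<le> sample_average s"
    unfolding integral_empirical_measure[OF T] by (intro sample_average_mono T_what)
  also have "(\<integral>p. lam * nrm (fst p - snd p) \<partial>\<kappa>) \<le> lam * \<theta> + e"
  proof -
    have "lam * (\<integral>p. nrm (fst p - snd p) \<partial>\<kappa>) \<le> lam * (\<theta> + e / (lam + 1))"
      using cost(2) lam by (intro mult_left_mono) auto
    also have "\<dots> \<le> lam * \<theta> + e"
      using lam \<open>0 < e\<close> by (simp add: distrib_left field_simps)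
    finally show ?thesis
      by simp
  qed
  finally show "integral\<^sup>L \<mu> L \<le> lam * \<theta> + sample_average s + e"
    by simp
qed

lemma distr_pmf_in_prob_measures_on:
  assumes "W \<in> sets borel" "\<And>x. f x \<in> W"
  shows "distr (measure_pmf q) borel f \<in> prob_measures_on W"
proof -
  have f: "f \<in> measurable (measure_pmf q) borel"
    by simp
  have "f -` W \<inter> space (measure_pmf q) = space (measure_pmf q)"
    using assms(2) by auto
  then show ?thesis
    unfolding prob_measures_on_def using emeasure_distr[OF f assms(1)] measure_pmf.prob_space_distr[OF f]
    by simp
qed

lemma wasserstein_distr_pmf_le:
  fixes nrm :: "'a::euclidean_space \<Rightarrow> real" and f g :: "'b \<Rightarrow> 'a"
  assumes nrm: "is_norm nrm" and q: "finite (set_pmf q)"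
  shows "wasserstein nrm (distr (measure_pmf q) borel f) (distr (measure_pmf q) borel g)
    \<le> ennreal (\<integral>x. nrm (f x - g x) \<partial>measure_pmf q)"
proof -
  define \<kappa> where "\<kappa> = distr (measure_pmf q) borel (\<lambda>x. (f x, g x))"
  have fg: "(\<lambda>x. (f x, g x)) \<in> measurable (measure_pmf q) borel"
    by simp
  have fst: "fst \<in> borel_measurable (borel :: ('a \<times> 'a) measure)"
    and snd: "snd \<in> borel_measurable (borel :: ('a \<times> 'a) measure)"
    by (auto intro!: borel_measurable_continuous_onI continuous_on_fst continuous_on_snd continuous_on_id)
  have "\<kappa> \<in> couplings (distr (measure_pmf q) borel f) (distr (measure_pmf q) borel g)"
    unfolding couplings_def \<kappa>_def
    using distr_distr[OF fst fg] distr_distr[OF snd fg] measure_pmf.prob_space_distr[OF fg]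
    by (simp add: comp_def)
  then have "wasserstein nrm (distr (measure_pmf q) borel f) (distr (measure_pmf q) borel g)
      \<le> (\<integral>\<^sup>+ p. ennreal (nrm (fst p - snd p)) \<partial>\<kappa>)"
    unfolding wasserstein_def by (rule INF_lower)
  also have "\<dots> = (\<integral>\<^sup>+ x. ennreal (nrm (f x - g x)) \<partial>measure_pmf q)"
    unfolding \<kappa>_def using is_norm_diff_borel_measurable[OF nrm] by (subst nn_integral_distr[OF fg]) auto
  also have "\<dots> = ennreal (\<integral>x. nrm (f x - g x) \<partial>measure_pmf q)"
    by (rule nn_integral_eq_integral) (auto intro: integrable_measure_pmf_finite[OF q] simp: is_norm_nonneg[OF nrm])
  finally show ?thesis .
qed

lemma integral_uniform_bernoulli_pmf:
  fixes f :: "'k::finite \<times> bool \<Rightarrow> real"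
  assumes "0 \<le> \<alpha>" "\<alpha> \<le> 1"
  shows "(\<integral>x. f x \<partial>measure_pmf (pair_pmf (pmf_of_set UNIV) (bernoulli_pmf \<alpha>)))
    = \<alpha> * sample_average (\<lambda>k. f (k, True)) + (1 - \<alpha>) * sample_average (\<lambda>k. f (k, False))"
proof -
  have "(\<integral>x. f x \<partial>measure_pmf (pair_pmf (pmf_of_set UNIV) (bernoulli_pmf \<alpha>)))
      = (\<Sum>x\<in>UNIV \<times> UNIV. f x * pmf (pair_pmf (pmf_of_set UNIV) (bernoulli_pmf \<alpha>)) x)"
    by (subst integral_measure_pmf_real) (auto simp: UNIV_Times_UNIV)
  also have "\<dots> = (\<Sum>k\<in>UNIV. f (k, True) * (\<alpha> / real CARD('k)) + f (k, False) * ((1 - \<alpha>) / real CARD('k)))"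
    using assms by (simp add: sum.cartesian_product' UNIV_bool pmf_pair add.commute)
  finally show ?thesis
    unfolding sample_average_def by (simp add: sum.distrib sum_distrib_left sum_divide_distrib algebra_simps)
qed

lemma distr_uniform_bernoulli_fst:
  fixes what :: "'k::finite \<Rightarrow> 'a::euclidean_space"
  shows "distr (measure_pmf (pair_pmf (pmf_of_set UNIV) (bernoulli_pmf \<alpha>))) borel (\<lambda>x. what (fst x))
    = empirical_measure what"
proof -
  have "distr (measure_pmf (pair_pmf (pmf_of_set UNIV) (bernoulli_pmf \<alpha>))) borel (what \<circ> fst)
      = distr (distr (measure_pmf (pair_pmf (pmf_of_set UNIV) (bernoulli_pmf \<alpha>))) (count_space UNIV) fst) borel what"
    by (rule distr_distr[symmetric]) auto
  also have "distr (measure_pmf (pair_pmf (pmf_of_set UNIV) (bernoulli_pmf \<alpha>))) (count_space UNIV) fst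
      = measure_pmf (pmf_of_set UNIV)"
    unfolding map_pmf_rep_eq[symmetric] map_fst_pair_pmf ..
  finally show ?thesis
    by (simp add: comp_def empirical_measure_eq_distr_pmf)
qed

lemma two_point_mixture_in_wasserstein_ball:
  fixes what u v :: "'k::finite \<Rightarrow> 'a::euclidean_space" and L :: "'a \<Rightarrow> real"
  assumes nrm: "is_norm nrm" and W: "W \<in> sets borel" "\<And>i. u i \<in> W" "\<And>i. v i \<in> W"
    and \<alpha>: "0 \<le> \<alpha>" "\<alpha> \<le> 1" and L: "L \<in> borel_measurable borel"
    and budget: "\<alpha> * sample_average (\<lambda>i. nrm (u i - what i))
      + (1 - \<alpha>) * sample_average (\<lambda>i. nrm (v i - what i)) \<le> \<theta>"
  shows "\<alpha> * sample_average (\<lambda>i. L (u i)) + (1 - \<alpha>) * sample_average (\<lambda>i. L (v i))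
    \<in> (\<lambda>\<mu>. integral\<^sup>L \<mu> L) ` {\<mu>\<in>prob_measures_on W. wasserstein nrm \<mu> (empirical_measure what) \<le> ennreal \<theta>}"
proof (rule image_eqI)
  define q where "q = pair_pmf (pmf_of_set (UNIV :: 'k set)) (bernoulli_pmf \<alpha>)"
  define f where "f = (\<lambda>(k, b). if b then u k else v k)"
  have q: "finite (set_pmf q)"
    by (rule finite_subset[of _ UNIV]) auto
  have "distr (measure_pmf q) borel f \<in> prob_measures_on W"
    using W unfolding f_def by (intro distr_pmf_in_prob_measures_on) auto
  moreover have "wasserstein nrm (distr (measure_pmf q) borel f) (empirical_measure what)
      \<le> ennreal (\<alpha> * sample_average (\<lambda>i. nrm (u i - what i)) + (1 - \<alpha>) * sample_average (\<lambda>i. nrm (v i - what i)))"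
    using wasserstein_distr_pmf_le[OF nrm q, of f "\<lambda>x. what (fst x)"]
    unfolding q_def distr_uniform_bernoulli_fst integral_uniform_bernoulli_pmf[OF \<alpha>] by (simp add: f_def)
  then have "wasserstein nrm (distr (measure_pmf q) borel f) (empirical_measure what) \<le> ennreal \<theta>"
    using ennreal_leI[OF budget] by (rule order_trans)
  ultimately show "distr (measure_pmf q) borel f
      \<in> {\<mu>\<in>prob_measures_on W. wasserstein nrm \<mu> (empirical_measure what) \<le> ennreal \<theta>}"
    by simp
  show "\<alpha> * sample_average (\<lambda>i. L (u i)) + (1 - \<alpha>) * sample_average (\<lambda>i. L (v i))
      = integral\<^sup>L (distr (measure_pmf q) borel f) L"
    using integral_distr[OF _ L, of f "measure_pmf q"]
    unfolding q_def integral_uniform_bernoulli_pmf[OF \<alpha>] by (simp add: f_def)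
qed

text \<open>Seen from (\<theta>, P), a point (c2, v2) beyond the budget \<theta> has slope at most that of any point
  (c1, v1) within it: mix the two so that the budget is met exactly.\<close>

lemma mixture_slope_le:
  fixes c1 c2 v1 v2 P \<theta> :: real
  assumes c: "c1 < \<theta>" "\<theta> < c2"
    and mix: "\<And>\<alpha>. 0 \<le> \<alpha> \<Longrightarrow> \<alpha> \<le> 1 \<Longrightarrow> \<alpha> * c1 + (1 - \<alpha>) * c2 \<le> \<theta> \<Longrightarrow> \<alpha> * v1 + (1 - \<alpha>) * v2 \<le> P"
  shows "(v2 - P) / (c2 - \<theta>) \<le> (P - v1) / (\<theta> - c1)"
proof -
  define \<alpha> where "\<alpha> = (c2 - \<theta>) / (c2 - c1)"
  have \<alpha>: "0 \<le> \<alpha>" "\<alpha> \<le> 1" "1 - \<alpha> = (\<theta> - c1) / (c2 - c1)"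
    using c unfolding \<alpha>_def by (auto simp: field_simps)
  have "\<alpha> * c1 + (1 - \<alpha>) * c2 = ((c2 - \<theta>) * c1 + (\<theta> - c1) * c2) / (c2 - c1)"
    unfolding \<alpha>(3) unfolding \<alpha>_def by (simp add: add_divide_distrib)
  also have "(c2 - \<theta>) * c1 + (\<theta> - c1) * c2 = \<theta> * (c2 - c1)"
    by (simp add: algebra_simps)
  finally have "\<alpha> * c1 + (1 - \<alpha>) * c2 = \<theta>"
    using c by simp
  then have "\<alpha> * v1 + (1 - \<alpha>) * v2 \<le> P"
    by (intro mix[OF \<alpha>(1,2)]) simp
  moreover have "\<alpha> * v1 + (1 - \<alpha>) * v2 = ((c2 - \<theta>) * v1 + (\<theta> - c1) * v2) / (c2 - c1)"
    unfolding \<alpha>(3) unfolding \<alpha>_def by (simp add: add_divide_distrib)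
  ultimately have "(c2 - \<theta>) * v1 + (\<theta> - c1) * v2 \<le> P * (c2 - c1)"
    using c by (simp add: pos_divide_le_eq)
  then show ?thesis
    using c by (simp add: field_simps)
qed

text \<open>The multiplier is the largest slope, seen from (\<theta>, P), of a configuration beyond the budget.\<close>

lemma exists_lagrange_multiplier:
  fixes cost val :: "'c \<Rightarrow> real"
  assumes \<theta>: "0 < \<theta>" and c0: "c0 \<in> C" "cost c0 = 0"
    and mix: "\<And>c1 c2 \<alpha>. c1 \<in> C \<Longrightarrow> c2 \<in> C \<Longrightarrow> 0 \<le> \<alpha> \<Longrightarrow> \<alpha> \<le> 1 \<Longrightarrow>
      \<alpha> * cost c1 + (1 - \<alpha>) * cost c2 \<le> \<theta> \<Longrightarrow> \<alpha> * val c1 + (1 - \<alpha>) * val c2 \<le> P"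
  obtains lam where "0 \<le> lam" "\<And>c. c \<in> C \<Longrightarrow> val c - lam * cost c \<le> P - lam * \<theta>"
proof -
  have within_budget: "val c \<le> P" if "c \<in> C" "cost c \<le> \<theta>" for c
    using mix[OF that(1) that(1), of 1] that by simp
  define R where "R = {c \<in> C. \<theta> < cost c}"
  define slope where "slope c = (val c - P) / (cost c - \<theta>)" for c
  have slope_le: "slope c2 \<le> (P - val c1) / (\<theta> - cost c1)" if "c1 \<in> C" "cost c1 < \<theta>" "c2 \<in> R" for c1 c2
    using that unfolding slope_def R_def by (intro mixture_slope_le) (auto intro: mix)
  define lam where "lam = (if R = {} then 0 else max 0 (SUP c\<in>R. slope c))"
  have bdd: "bdd_above (slope ` R)"
    using slope_le[OF c0(1)] c0(2) \<theta> by (intro bdd_aboveI[where M = "(P - val c0) / \<theta>"]) auto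
  have "val c - lam * cost c \<le> P - lam * \<theta>" if c: "c \<in> C" for c
  proof (cases "\<theta> < cost c")
    case True
    then have "slope c \<le> lam"
      using c bdd unfolding lam_def R_def by (auto intro: max.coboundedI2 cSUP_upper)
    then show ?thesis
      using True unfolding slope_def by (simp add: divide_le_eq algebra_simps)
  next
    case False
    show ?thesis
    proof (cases "cost c = \<theta>")
      case False
      then have lt: "cost c < \<theta>"
        using \<open>\<not> \<theta> < cost c\<close> by simp
      have "(SUP c\<in>R. slope c) \<le> (P - val c) / (\<theta> - cost c)" if "R \<noteq> {}"
        using that slope_le[OF c lt] by (intro cSUP_least) auto
      moreover have "0 \<le> (P - val c) / (\<theta> - cost c)"
        using within_budget[OF c] lt by simp
      ultimately have "lam \<le> (P - val c) / (\<theta> - cost c)"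
        unfolding lam_def by (cases "R = {}") auto
      then show ?thesis
        using lt by (simp add: le_divide_eq algebra_simps)
    qed (use within_budget[OF c] in simp)
  qed
  then show ?thesis
    using that[of lam] unfolding lam_def by (simp split: if_splits)
qed

lemma compact_obtain_maximizers:
  fixes f :: "'i \<Rightarrow> 'a::topological_space \<Rightarrow> real"
  assumes "compact W" "W \<noteq> {}" "\<And>i. continuous_on W (f i)"
  obtains w where "\<And>i. w i \<in> W" "\<And>i v. v \<in> W \<Longrightarrow> f i v \<le> f i (w i)"
proof -
  have "\<forall>i. \<exists>w\<in>W. \<forall>v\<in>W. f i v \<le> f i w"
    using continuous_attains_sup[OF assms(1,2)] assms(3) by blast
  then show ?thesis
    using that by metis
qed

lemma exists_dual_value_le_worst_case:
  fixes what :: "'k::finite \<Rightarrow> 'a::euclidean_space" and L :: "'a \<Rightarrow> real"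
  assumes nrm: "is_norm nrm" and W: "compact W" "\<And>i. what i \<in> W" and \<theta>: "0 < \<theta>"
    and L: "continuous_on UNIV L"
    and bdd: "bdd_above ((\<lambda>\<mu>. integral\<^sup>L \<mu> L) `
      {\<mu>\<in>prob_measures_on W. wasserstein nrm \<mu> (empirical_measure what) \<le> ennreal \<theta>})"
  obtains lam s where "0 \<le> lam" "\<And>i w. w \<in> W \<Longrightarrow> L w - lam * nrm (w - what i) \<le> s i"
    "lam * \<theta> + sample_average s
      \<le> (SUP \<mu>\<in>{\<mu>\<in>prob_measures_on W. wasserstein nrm \<mu> (empirical_measure what) \<le> ennreal \<theta>}. integral\<^sup>L \<mu> L)"
proof -
  define P where "P = (SUP \<mu>\<in>{\<mu>\<in>prob_measures_on W. wasserstein nrm \<mu> (empirical_measure what) \<le> ennreal \<theta>}.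
    integral\<^sup>L \<mu> L)"
  define cost where "cost (w :: 'k \<Rightarrow> 'a) = sample_average (\<lambda>i. nrm (w i - what i))" for w
  define val where "val (w :: 'k \<Rightarrow> 'a) = sample_average (\<lambda>i. L (w i))" for w
  have mixture_le: "\<alpha> * val w1 + (1 - \<alpha>) * val w2 \<le> P"
    if "w1 \<in> {w. \<forall>i. w i \<in> W}" "w2 \<in> {w. \<forall>i. w i \<in> W}" "0 \<le> \<alpha>" "\<alpha> \<le> 1"
      "\<alpha> * cost w1 + (1 - \<alpha>) * cost w2 \<le> \<theta>" for w1 w2 \<alpha>
  proof -
    have "\<alpha> * val w1 + (1 - \<alpha>) * val w2
        \<in> (\<lambda>\<mu>. integral\<^sup>L \<mu> L) ` {\<mu>\<in>prob_measures_on W. wasserstein nrm \<mu> (empirical_measure what) \<le> ennreal \<theta>}"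
      unfolding val_def using that unfolding cost_def
      by (intro two_point_mixture_in_wasserstein_ball[OF nrm borel_closed[OF compact_imp_closed[OF W(1)]]
            _ _ _ _ borel_measurable_continuous_onI[OF L]]) auto
    then show ?thesis
      unfolding P_def by (rule cSup_upper[OF _ bdd])
  qed
  have what: "what \<in> {w. \<forall>i. w i \<in> W}" "cost what = 0"
    using W(2) unfolding cost_def sample_average_def by (simp_all add: is_norm_zero[OF nrm])
  obtain lam where lam: "0 \<le> lam"
    and lagrange: "\<And>w. w \<in> {w. \<forall>i. w i \<in> W} \<Longrightarrow> val w - lam * cost w \<le> P - lam * \<theta>"
    using exists_lagrange_multiplier[where cost = cost and val = val and P = P, OF \<theta> what mixture_le] by blast
  have "continuous_on W (\<lambda>v. L v - lam * nrm (v - what i))" for i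
    by (intro continuous_intros continuous_on_subset[OF L]
        continuous_on_compose2[OF is_norm_continuous_on[OF nrm]]) auto
  moreover have "W \<noteq> {}"
    using W(2) by blast
  ultimately obtain w_opt where w_opt: "\<And>i. w_opt i \<in> W"
    "\<And>i v. v \<in> W \<Longrightarrow> L v - lam * nrm (v - what i) \<le> L (w_opt i) - lam * nrm (w_opt i - what i)"
    using compact_obtain_maximizers[OF W(1), of "\<lambda>i v. L v - lam * nrm (v - what i)"] by blast
  show ?thesis
  proof (rule that[of lam "\<lambda>i. L (w_opt i) - lam * nrm (w_opt i - what i)"], unfold P_def[symmetric])
    show "lam * \<theta> + sample_average (\<lambda>i. L (w_opt i) - lam * nrm (w_opt i - what i)) \<le> P"
      using lagrange[of w_opt] w_opt(1)
      unfolding val_def cost_def sample_average_def by (simp add: sum_subtractf sum_distrib_left algebra_simps)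
  qed (use lam w_opt(2) in auto)
qed

theorem wasserstein_dro_duality:
  fixes what :: "'k::finite \<Rightarrow> 'a::euclidean_space" and L :: "'a \<Rightarrow> real"
  assumes nrm: "is_norm nrm" and W: "compact W" "\<And>i. what i \<in> W" and \<theta>: "0 < \<theta>"
    and L: "continuous_on UNIV L"
  shows "(SUP \<mu>\<in>{\<mu>\<in>prob_measures_on W. wasserstein nrm \<mu> (empirical_measure what) \<le> ennreal \<theta>}.
      integral\<^sup>L \<mu> L)
    = Inf {lam * \<theta> + sample_average s | lam s. 0 \<le> lam \<and> (\<forall>i. \<forall>w\<in>W. L w - lam * nrm (w - what i) \<le> s i)}"
    (is "Sup ?X = Inf ?D")
proof -
  have weak: "x \<le> d" if xX: "x \<in> ?X" and dD: "d \<in> ?D" for x d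
  proof -
    obtain \<mu> where \<mu>: "\<mu> \<in> prob_measures_on W" "wasserstein nrm \<mu> (empirical_measure what) \<le> ennreal \<theta>"
      and x: "x = integral\<^sup>L \<mu> L"
      using xX by blast
    obtain lam s where d: "d = lam * \<theta> + sample_average s" and lam: "0 \<le> lam"
      and s: "\<And>i w. w \<in> W \<Longrightarrow> L w - lam * nrm (w - what i) \<le> s i"
      using dD by blast
    show ?thesis
      unfolding x d using \<theta> by (intro integral_le_wasserstein_dual[OF nrm W(1) \<mu> L _ lam])
        (auto dest: s simp: diff_le_eq add.commute)
  qed
  have X_mem: "1 * sample_average (\<lambda>i. L (what i)) + (1 - 1) * sample_average (\<lambda>i. L (what i)) \<in> ?X"
    by (rule two_point_mixture_in_wasserstein_ball[OF nrm borel_closed[OF compact_imp_closed[OF W(1)]]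
          W(2) W(2) _ _ borel_measurable_continuous_onI[OF L]])
      (use \<theta> in \<open>simp_all add: sample_average_def is_norm_zero[OF nrm]\<close>)
  obtain w_max where "w_max \<in> W" "\<And>v. v \<in> W \<Longrightarrow> L v \<le> L w_max"
    using continuous_attains_sup[OF W(1) _ continuous_on_subset[OF L]] W(2) by blast
  then have "0 * \<theta> + sample_average (\<lambda>i::'k. L w_max) \<in> ?D"
    by (intro CollectI exI[of _ 0] exI[of _ "\<lambda>i. L w_max"]) simp
  then have bdd: "bdd_above ?X"
    using weak by (intro bdd_aboveI[where M = "0 * \<theta> + sample_average (\<lambda>i::'k. L w_max)"])
  obtain lam s where lam: "0 \<le> lam" and s: "\<And>i w. w \<in> W \<Longrightarrow> L w - lam * nrm (w - what i) \<le> s i"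
    and le_Sup: "lam * \<theta> + sample_average s \<le> Sup ?X"
    using exists_dual_value_le_worst_case[OF nrm W \<theta> L bdd] by blast
  have D_mem: "lam * \<theta> + sample_average s \<in> ?D"
    using lam s by (intro CollectI exI[of _ lam] exI[of _ s]) simp
  have "Inf ?D \<le> Sup ?X"
    by (rule cInf_lower2[OF D_mem le_Sup bdd_belowI[OF weak[OF X_mem]]])
  moreover have "Sup ?X \<le> Inf ?D"
    using X_mem D_mem weak by (intro cSup_least cInf_greatest) auto
  ultimately show ?thesis
    by simp
qed

section \<open>Polyhedral duality for the inner maximisation\<close>

lemma nonpos_if_bounded_on_ray:
  fixes c e b :: real
  assumes "\<And>k. 0 \<le> k \<Longrightarrow> k * c + e \<le> b"
  shows "c \<le> 0"
proof (rule ccontr)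
  assume "\<not> c \<le> 0"
  define k where "k = (\<bar>b\<bar> + \<bar>e\<bar> + 1) / c"
  have "k * c = \<bar>b\<bar> + \<bar>e\<bar> + 1"
    using \<open>\<not> c \<le> 0\<close> unfolding k_def by simp
  moreover have "k * c + e \<le> b"
    using \<open>\<not> c \<le> 0\<close> unfolding k_def by (intro assms) simp
  ultimately show False
    using abs_ge_self[of b] abs_ge_minus_self[of e] by linarith
qed

lemma bounded_polyhedron_recession_eq_0:
  fixes H :: "real^'n::finite^'q::finite"
  assumes bounded: "bounded {w. \<forall>r. (H *v w) $ r \<le> h $ r}" and w0: "\<forall>r. (H *v w0) $ r \<le> h $ r"
    and d: "\<And>r. (H *v d) $ r \<le> 0"
  shows "d = 0"
proof -
  obtain M where M: "\<And>w. \<forall>r. (H *v w) $ r \<le> h $ r \<Longrightarrow> norm w \<le> M"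
    using bounded unfolding bounded_iff by blast
  have "k * norm d + - norm w0 \<le> M" if "0 \<le> k" for k
  proof -
    have "(H *v (w0 + k *\<^sub>R d)) $ r \<le> h $ r" for r
      using spec[OF w0, of r] mult_left_mono[OF d[of r] that]
      by (simp add: matrix_vector_right_distrib matrix_vector_mult_scaleR)
    then have "norm (w0 + k *\<^sub>R d) \<le> M"
      using M by blast
    moreover have "norm (k *\<^sub>R d) \<le> norm (w0 + k *\<^sub>R d) + norm w0"
      using norm_triangle_ineq4[of "w0 + k *\<^sub>R d" w0] by simp
    ultimately show ?thesis
      using that by simp
  qed
  then have "norm d \<le> 0"
    by (rule nonpos_if_bounded_on_ray)
  then show ?thesis
    by simp
qed

lemma Min_le_inner_simplex:
  fixes \<rho> v :: "real^'m::finite"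
  assumes "\<forall>j. 0 \<le> \<rho> $ j" "inner \<rho> (\<chi> j. 1) = 1"
  shows "Min (range (\<lambda>j. v $ j)) \<le> inner \<rho> v"
proof -
  have "Min (range (\<lambda>j. v $ j)) = (\<Sum>j\<in>UNIV. \<rho> $ j * Min (range (\<lambda>j. v $ j)))"
    using assms(2) by (simp add: inner_vec_def sum_distrib_right[symmetric])
  also have "\<dots> \<le> (\<Sum>j\<in>UNIV. \<rho> $ j * v $ j)"
    using assms(1) by (intro sum_mono mult_left_mono) auto
  finally show ?thesis
    by (simp add: inner_vec_def)
qed

definition simplex_orthant :: "((real^'m::finite) \<times> (real^'q::finite)) set" where
  "simplex_orthant = ({\<rho>. \<forall>j. 0 \<le> \<rho> $ j} \<inter> {\<rho>. inner (\<chi> j. 1) \<rho> = 1}) \<times> {\<gamma>. \<forall>r. 0 \<le> \<gamma> $ r}"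

lemma mem_simplex_orthant:
  "(\<rho>, \<gamma>) \<in> simplex_orthant \<longleftrightarrow> (\<forall>j. 0 \<le> \<rho> $ j) \<and> inner \<rho> (\<chi> j. 1) = 1 \<and> (\<forall>r. 0 \<le> \<gamma> $ r)"
  unfolding simplex_orthant_def by (auto simp: inner_commute)

lemma axis_mem_simplex_orthant: "0 \<le> k \<Longrightarrow> (axis j 1, k *\<^sub>R axis r 1) \<in> simplex_orthant"
  unfolding mem_simplex_orthant by (simp add: axis_def inner_vec_def)

lemma convex_simplex_orthant: "convex simplex_orthant"
  unfolding simplex_orthant_def by (intro convex_Times convex_Int convex_box_cart convex_hyperplane)
    (use convex_real_interval(1)[of 0] in \<open>simp_all add: atLeast_def\<close>)

lemma simplex_orthant_lower_bound:
  fixes a :: "real^'m::finite" and b :: "real^'q::finite"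
  assumes le: "\<And>\<rho> \<gamma>. (\<rho>, \<gamma>) \<in> simplex_orthant \<Longrightarrow> M \<le> inner \<rho> a + inner \<gamma> b"
  shows "\<forall>r. 0 \<le> b $ r" "M \<le> Min (range (\<lambda>j. a $ j))"
proof -
  obtain j0 :: 'm where True
    by blast
  show "\<forall>r. 0 \<le> b $ r"
  proof
    fix r
    have "k * - b $ r + M \<le> a $ j0" if "0 \<le> k" for k
      using le[OF axis_mem_simplex_orthant[OF that, of j0 r]] by (simp add: inner_axis')
    then have "- b $ r \<le> 0"
      by (rule nonpos_if_bounded_on_ray)
    then show "0 \<le> b $ r"
      by simp
  qed
  have "M \<le> a $ j" for j
    using le[OF axis_mem_simplex_orthant[where k = 0 and j = j, OF order_refl]] by (simp add: inner_axis')
  then show "M \<le> Min (range (\<lambda>j. a $ j))"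
    by simp
qed

lemma convex_multiplier_image:
  fixes G :: "real^'n::finite^'m::finite" and H :: "real^'n^'q::finite"
  shows "convex ((\<lambda>(\<rho>, \<gamma>). (transpose H *v \<gamma> + transpose G *v \<rho>, inner \<rho> a + inner \<gamma> b)) ` simplex_orthant)"
proof (rule convex_linear_image[OF _ convex_simplex_orthant])
  show "linear (\<lambda>(\<rho>, \<gamma>). (transpose H *v \<gamma> + transpose G *v \<rho>, inner \<rho> a + inner \<gamma> b))"
    unfolding linear_iff
    by (simp add: split_paired_all inner_add_left matrix_vector_right_distrib matrix_vector_mult_scaleR
        scaleR_add_right distrib_left del: transpose_matrix_vector)
qed

lemma inner_transpose_mult: "inner x (transpose M *v y) = inner (M *v x) (y :: real^'m::finite)"
  using dot_lmul_matrix[of y M x] by (simp add: inner_commute)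

lemma multiplier_halfspace_imp_nonpos:
  fixes G :: "real^'n::finite^'m::finite" and H :: "real^'n^'q::finite"
  assumes "\<And>\<rho> \<gamma>. (\<rho>, \<gamma>) \<in> simplex_orthant \<Longrightarrow> inner d (transpose H *v \<gamma> + transpose G *v \<rho>) \<le> b"
  shows "(H *v d) $ r \<le> 0"
proof -
  obtain j0 :: 'm where True
    by blast
  have "k * (H *v d) $ r + inner d (transpose G *v axis j0 1) \<le> b" if "0 \<le> k" for k
    using assms[OF axis_mem_simplex_orthant[OF that, of j0 r]]
    by (simp add: inner_add_right inner_transpose_mult inner_axis del: transpose_matrix_vector)
  then show ?thesis
    by (rule nonpos_if_bounded_on_ray)
qed

text \<open>Separate S from {dual norm \<le> c} \<times> {..r}. Either the normal is horizontal, or it can be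
  scaled to (\<delta>, -1); then a norming functional of \<delta> turns the bound on the second set into
  c nrm \<delta> + r.\<close>

lemma dual_norm_separation_alternative:
  fixes nrm :: "'a::euclidean_space \<Rightarrow> real" and S :: "('a \<times> real) set"
  assumes nrm: "is_norm nrm" and S: "convex S" "S \<noteq> {}" and c: "0 \<le> c"
    and disjoint: "\<And>x s. (x, s) \<in> S \<Longrightarrow> dual_norm nrm x \<le> c \<Longrightarrow> r < s"
  obtains (halfspace) d b where "d \<noteq> 0" "\<And>x s. (x, s) \<in> S \<Longrightarrow> inner d x \<le> b"
    | (shift) \<delta> where "\<And>x s. (x, s) \<in> S \<Longrightarrow> c * nrm \<delta> + r \<le> s - inner \<delta> x"
proof -
  define T where "T = {x. dual_norm nrm x \<le> c} \<times> {..r}"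
  have "convex T"
    unfolding T_def by (intro convex_Times convex_sublevel convex_on_dual_norm[OF nrm]) simp
  moreover have "(0, r) \<in> T"
    unfolding T_def using c by (simp add: dual_norm_zero[OF nrm])
  moreover have "S \<inter> T = {}"
  proof (intro equals0I)
    fix p assume "p \<in> S \<inter> T"
    then show False
      using disjoint[of "fst p" "snd p"] unfolding T_def by (cases p) auto
  qed
  ultimately obtain a b where a: "a \<noteq> 0" "\<forall>p\<in>S. inner a p \<le> b" "\<forall>p\<in>T. b \<le> inner a p"
    using separating_hyperplane_sets[OF S(1) _ S(2)] by blast
  obtain d \<tau> where d\<tau>: "a = (d, \<tau>)"
    by (cases a)
  have S_le: "inner d x + \<tau> * s \<le> b" if "(x, s) \<in> S" for x s
    using bspec[OF a(2) that] unfolding d\<tau> by simp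
  have T_ge: "b \<le> inner d x + \<tau> * s" if "dual_norm nrm x \<le> c" "s \<le> r" for x s
    using bspec[OF a(3), of "(x, s)"] that unfolding d\<tau> T_def by simp
  have "k * \<tau> + (b - \<tau> * r) \<le> 0" if "0 \<le> k" for k
    using T_ge[of 0 "r - k"] that c by (simp add: dual_norm_zero[OF nrm] algebra_simps)
  then have "\<tau> \<le> 0"
    by (rule nonpos_if_bounded_on_ray)
  show ?thesis
  proof (cases "\<tau> = 0")
    case True
    then show ?thesis
      using halfspace[of d b] a(1) S_le unfolding d\<tau> by (simp add: zero_prod_def)
  next
    case False
    then obtain t where t: "0 < t" "\<tau> = - t"
      using \<open>\<tau> \<le> 0\<close> by (intro that[of "- \<tau>"]) auto
    define \<delta> where "\<delta> = (1 / t) *\<^sub>R d"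
    have d_eq: "d = t *\<^sub>R \<delta>"
      using t unfolding \<delta>_def by simp
    obtain x0 where x0: "dual_norm nrm x0 \<le> 1" "inner x0 \<delta> = nrm \<delta>"
      using dual_norm_norming_functional[OF nrm] by blast
    have "dual_norm nrm ((- c) *\<^sub>R x0) \<le> \<bar>- c\<bar> * dual_norm nrm x0"
      by (rule dual_norm_scaleR_le[OF nrm])
    also have "\<dots> \<le> c"
      using x0(1) c by (simp add: mult_left_le)
    finally have "b \<le> - t * (c * nrm \<delta> + r)"
      using T_ge[of "(- c) *\<^sub>R x0" r] x0(2) unfolding d_eq t(2)
      by (simp add: inner_commute algebra_simps)
    show ?thesis
    proof (rule shift)
      fix x s assume "(x, s) \<in> S"
      then have "t * (inner \<delta> x - s) \<le> t * (- (c * nrm \<delta> + r))"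
        using S_le \<open>b \<le> - t * (c * nrm \<delta> + r)\<close> unfolding d_eq t(2) by (fastforce simp: algebra_simps)
      then show "c * nrm \<delta> + r \<le> s - inner \<delta> x"
        using t(1) by (simp add: mult_le_cancel_left_pos)
    qed
  qed
qed

lemma exists_approx_dual_multipliers:
  fixes G :: "real^'n::finite^'m::finite" and H :: "real^'n^'q::finite" and nrm :: "real^'n \<Rightarrow> real"
  assumes nrm: "is_norm nrm" and bounded: "bounded {w. \<forall>r. (H *v w) $ r \<le> h $ r}"
    and wh: "\<forall>r. (H *v wh) $ r \<le> h $ r" and lam: "0 \<le> lam" and e: "0 < e"
    and le: "\<And>w. \<forall>r. (H *v w) $ r \<le> h $ r \<Longrightarrow>
      Min (range (\<lambda>j. (G *v (y - w) + g) $ j)) - lam * nrm (w - wh) \<le> \<sigma>"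
  obtains \<rho> \<gamma> where "inner \<rho> (G *v (y - wh) + g) + inner \<gamma> (h - H *v wh) \<le> \<sigma> + e"
    "dual_norm nrm (transpose H *v \<gamma> + transpose G *v \<rho>) \<le> lam + e"
    "inner \<rho> (\<chi> j. 1) = 1" "\<forall>r. 0 \<le> \<gamma> $ r" "\<forall>j. 0 \<le> \<rho> $ j"
proof (rule ccontr)
  note multipliers = that
  assume none: "\<not> thesis"
  define \<Phi> where "\<Phi> = (\<lambda>(\<rho>, \<gamma>). (transpose H *v \<gamma> + transpose G *v \<rho>,
    inner \<rho> (G *v (y - wh) + g) + inner \<gamma> (h - H *v wh)))"
  have convex: "convex (\<Phi> ` simplex_orthant)"
    unfolding \<Phi>_def by (rule convex_multiplier_image)
  have \<Phi>_in: "(transpose H *v \<gamma> + transpose G *v \<rho>, inner \<rho> (G *v (y - wh) + g) + inner \<gamma> (h - H *v wh))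
      \<in> \<Phi> ` simplex_orthant" if "(\<rho>, \<gamma>) \<in> simplex_orthant" for \<rho> \<gamma>
    using that unfolding \<Phi>_def by (force intro: rev_image_eqI)
  then have nonempty: "\<Phi> ` simplex_orthant \<noteq> {}"
    using axis_mem_simplex_orthant[of 0] by blast
  have disjoint: "\<sigma> + e < s" if xs: "(x, s) \<in> \<Phi> ` simplex_orthant" and x: "dual_norm nrm x \<le> lam + e" for x s
  proof (rule ccontr)
    assume "\<not> \<sigma> + e < s"
    moreover obtain \<rho> \<gamma> where "(\<rho>, \<gamma>) \<in> simplex_orthant" "(x, s) = \<Phi> (\<rho>, \<gamma>)"
      using xs by auto
    ultimately show False
      using none multipliers[of \<rho> \<gamma>] x by (auto simp: \<Phi>_def mem_simplex_orthant)
  qed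
  have shifted_inner: "inner \<rho> (G *v (y - wh) + g) + inner \<gamma> (h - H *v wh)
      - inner \<delta> (transpose H *v \<gamma> + transpose G *v \<rho>)
    = inner \<rho> (G *v (y - (wh + \<delta>)) + g) + inner \<gamma> (h - H *v (wh + \<delta>))" for \<rho> \<gamma> \<delta>
    by (simp add: inner_add_right inner_diff_right inner_transpose_mult matrix_vector_mult_diff_distrib
        matrix_vector_right_distrib inner_commute del: transpose_matrix_vector)
  have "0 \<le> lam + e"
    using lam e by simp
  then show False
  proof (rule dual_norm_separation_alternative[OF nrm convex nonempty _ disjoint])
    fix d b assume "d \<noteq> 0" and halfspace: "\<And>x s. (x, s) \<in> \<Phi> ` simplex_orthant \<Longrightarrow> inner d x \<le> b"
    have "(H *v d) $ r \<le> 0" for r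
      by (rule multiplier_halfspace_imp_nonpos) (rule halfspace[OF \<Phi>_in])
    then show False
      using bounded_polyhedron_recession_eq_0[OF bounded wh] \<open>d \<noteq> 0\<close> by blast
  next
    fix \<delta>
    assume shift: "\<And>x s. (x, s) \<in> \<Phi> ` simplex_orthant \<Longrightarrow> (lam + e) * nrm \<delta> + (\<sigma> + e) \<le> s - inner \<delta> x"
    have lower: "(lam + e) * nrm \<delta> + (\<sigma> + e)
        \<le> inner \<rho> (G *v (y - (wh + \<delta>)) + g) + inner \<gamma> (h - H *v (wh + \<delta>))"
      if "(\<rho>, \<gamma>) \<in> simplex_orthant" for \<rho> \<gamma>
      using shift[OF \<Phi>_in[OF that]] by (simp only: shifted_inner)
    have "\<forall>r. 0 \<le> (h - H *v (wh + \<delta>)) $ r"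
      by (rule simplex_orthant_lower_bound(1)) (rule lower)
    then have "\<forall>r. (H *v (wh + \<delta>)) $ r \<le> h $ r"
      by simp
    from le[OF this] have "Min (range (\<lambda>j. (G *v (y - (wh + \<delta>)) + g) $ j)) - lam * nrm \<delta> \<le> \<sigma>"
      by simp
    moreover have "(lam + e) * nrm \<delta> + (\<sigma> + e) \<le> Min (range (\<lambda>j. (G *v (y - (wh + \<delta>)) + g) $ j))"
      by (rule simplex_orthant_lower_bound(2)) (rule lower)
    moreover have "(lam + e) * nrm \<delta> = lam * nrm \<delta> + e * nrm \<delta>" "0 \<le> e * nrm \<delta>"
      using e is_norm_nonneg[OF nrm, of \<delta>] by (simp_all add: distrib_right)
    ultimately show False
      using e by linarith
  qed
qed

section \<open>The piecewise affine loss\<close>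

definition piecewise_affine_loss :: "real^'n^'m \<Rightarrow> real^'m \<Rightarrow> real^'n \<Rightarrow> real \<Rightarrow> real^'n \<Rightarrow> real" where
  "piecewise_affine_loss G g y z w = max (max (Min (range (\<lambda>j. (G *v (y - w) + g) $ j)) - z) (- z)) 0"

definition dual_feasible ::
  "(real^'n \<Rightarrow> real) \<Rightarrow> real^'n^'m \<Rightarrow> real^'m \<Rightarrow> real^'n^'q \<Rightarrow> real^'q \<Rightarrow> real^'n \<Rightarrow> real \<Rightarrow>
    real^'n \<Rightarrow> real \<Rightarrow> real \<Rightarrow> real^'m \<Rightarrow> real^'q \<Rightarrow> real^'q \<Rightarrow> real^'q \<Rightarrow> bool" where
  "dual_feasible nrm G g H h y z wh lam s \<rho> \<gamma> \<eta> \<zeta> \<longleftrightarrow>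
    inner \<rho> (G *v (y - wh) + g) + inner \<gamma> (h - H *v wh) \<le> s + z
    \<and> inner \<eta> (h - H *v wh) \<le> s + z
    \<and> inner \<zeta> (h - H *v wh) \<le> s
    \<and> dual_norm nrm (transpose H *v \<gamma> + transpose G *v \<rho>) \<le> lam
    \<and> dual_norm nrm (transpose H *v \<eta>) \<le> lam
    \<and> dual_norm nrm (transpose H *v \<zeta>) \<le> lam
    \<and> inner \<rho> (\<chi> j. 1) = 1
    \<and> (\<forall>r. 0 \<le> \<gamma> $ r) \<and> (\<forall>j. 0 \<le> \<rho> $ j)
    \<and> (\<forall>r. 0 \<le> \<eta> $ r) \<and> (\<forall>r. 0 \<le> \<zeta> $ r)"

lemma continuous_on_piecewise_affine_loss: "continuous_on S (piecewise_affine_loss G g y z)"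
  unfolding piecewise_affine_loss_def
  by (intro continuous_intros continuous_on_MIN continuous_on_compose2[OF matrix_vector_mult_linear_continuous_on]) auto

lemma inner_transpose_le_slack:
  fixes H :: "real^'n::finite^'q::finite"
  assumes "\<forall>r. 0 \<le> \<gamma> $ r" "\<forall>r. (H *v w) $ r \<le> h $ r"
  shows "inner (transpose H *v \<gamma>) (w - wh) \<le> inner \<gamma> (h - H *v wh)"
proof -
  have "0 \<le> inner \<gamma> (h - H *v w)"
    using assms unfolding inner_vec_def by (intro sum_nonneg) simp
  then show ?thesis
    by (simp add: inner_commute inner_transpose_mult matrix_vector_mult_diff_distrib inner_diff_right
        del: transpose_matrix_vector)
qed

lemma dual_feasible_imp_loss_bound:
  assumes nrm: "is_norm nrm" and feasible: "dual_feasible nrm G g H h y z wh lam s \<rho> \<gamma> \<eta> \<zeta>"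
    and w: "\<forall>r. (H *v w) $ r \<le> h $ r"
  shows "piecewise_affine_loss G g y z w - lam * nrm (w - wh) \<le> s"
proof -
  note c = feasible[unfolded dual_feasible_def]
  note bound = neg_inner_le_dual_norm[OF nrm, of _ lam "w - wh"]
  have "Min (range (\<lambda>j. (G *v (y - w) + g) $ j)) \<le> inner \<rho> (G *v (y - w) + g)"
    using c by (intro Min_le_inner_simplex) auto
  also have "\<dots> = inner \<rho> (G *v (y - wh) + g) - inner (transpose G *v \<rho>) (w - wh)"
    by (simp add: inner_commute inner_transpose_mult matrix_vector_mult_diff_distrib inner_diff_right
        inner_add_right del: transpose_matrix_vector)
  finally have "Min (range (\<lambda>j. (G *v (y - w) + g) $ j)) - z \<le> s + lam * nrm (w - wh)"
    using c bound[of "transpose H *v \<gamma> + transpose G *v \<rho>"] inner_transpose_le_slack[OF _ w, of \<gamma> wh]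
    by (simp add: inner_add_left)
  moreover have "- z \<le> s + lam * nrm (w - wh)"
    using c bound[of "transpose H *v \<eta>"] inner_transpose_le_slack[OF _ w, of \<eta> wh] by simp
  moreover have "0 \<le> s + lam * nrm (w - wh)"
    using c bound[of "transpose H *v \<zeta>"] inner_transpose_le_slack[OF _ w, of \<zeta> wh] by simp
  ultimately show ?thesis
    unfolding piecewise_affine_loss_def by simp
qed

lemma dual_feasible_imp_nonneg:
  assumes "is_norm nrm" "dual_feasible nrm G g H h y z wh lam s \<rho> \<gamma> \<eta> \<zeta>"
  shows "0 \<le> lam"
  using assms dual_norm_nonneg[OF assms(1), of "transpose H *v \<eta>"] unfolding dual_feasible_def by linarith

lemma loss_bound_imp_dual_feasible:
  fixes G :: "real^'n::finite^'m::finite" and H :: "real^'n^'q::finite" and what :: "'k \<Rightarrow> real^'n"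
  assumes nrm: "is_norm nrm" and W: "W = {w. \<forall>r. (H *v w) $ r \<le> h $ r}" "bounded W" "\<And>i. what i \<in> W"
    and lam: "0 \<le> lam" and e: "0 < e"
    and le: "\<And>i w. w \<in> W \<Longrightarrow> piecewise_affine_loss G g y z w - lam * nrm (w - what i) \<le> s i"
  obtains \<rho> \<gamma> \<eta> \<zeta> where
    "\<And>i. dual_feasible nrm G g H h y z (what i) (lam + e) (s i + e) (\<rho> i) (\<gamma> i) (\<eta> i) (\<zeta> i)"
proof -
  have "\<exists>\<rho> \<gamma>. inner \<rho> (G *v (y - what i) + g) + inner \<gamma> (h - H *v what i) \<le> s i + z + e
    \<and> dual_norm nrm (transpose H *v \<gamma> + transpose G *v \<rho>) \<le> lam + e
    \<and> inner \<rho> (\<chi> j. 1) = 1 \<and> (\<forall>r. 0 \<le> \<gamma> $ r) \<and> (\<forall>j. 0 \<le> \<rho> $ j)" for i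
  proof -
    have "\<forall>r. (H *v what i) $ r \<le> h $ r"
      using W(3)[of i] unfolding W(1) by simp
    moreover have "Min (range (\<lambda>j. (G *v (y - w) + g) $ j)) - lam * nrm (w - what i) \<le> s i + z"
      if "\<forall>r. (H *v w) $ r \<le> h $ r" for w
      using le[of w i] that unfolding W(1) piecewise_affine_loss_def by simp
    ultimately show ?thesis
      by (rule exists_approx_dual_multipliers[OF nrm W(2)[unfolded W(1)] _ lam e]) auto
  qed
  then obtain \<rho> \<gamma> where \<rho>\<gamma>: "\<And>i. inner (\<rho> i) (G *v (y - what i) + g) + inner (\<gamma> i) (h - H *v what i) \<le> s i + z + e
    \<and> dual_norm nrm (transpose H *v \<gamma> i + transpose G *v \<rho> i) \<le> lam + e
    \<and> inner (\<rho> i) (\<chi> j. 1) = 1 \<and> (\<forall>r. 0 \<le> \<gamma> i $ r) \<and> (\<forall>j. 0 \<le> \<rho> i $ j)"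
    by metis
  have "dual_feasible nrm G g H h y z (what i) (lam + e) (s i + e) (\<rho> i) (\<gamma> i) 0 0" for i
  proof -
    have "0 \<le> s i" "- z \<le> s i"
      using le[OF W(3)[of i], of i] unfolding piecewise_affine_loss_def by (simp_all add: is_norm_zero[OF nrm])
    then show ?thesis
      using \<rho>\<gamma>[of i] lam e unfolding dual_feasible_def by (simp add: dual_norm_zero[OF nrm] algebra_simps)
  qed
  then show ?thesis
    by (rule that)
qed

lemma cInf_eq_if_approximating_subset:
  fixes A B :: "real set"
  assumes "B \<subseteq> A" "bdd_below A" and approx: "\<And>a e. a \<in> A \<Longrightarrow> 0 < e \<Longrightarrow> \<exists>b\<in>B. b \<le> a + e"
  shows "Inf B = Inf A"
proof (cases "A = {}")
  case False
  then have "B \<noteq> {}"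
    using approx[of _ 1] by fastforce
  have "Inf B \<le> a" if a: "a \<in> A" for a
  proof (rule field_le_epsilon)
    fix e :: real assume "0 < e"
    then obtain b where "b \<in> B" "b \<le> a + e"
      using approx[OF a] by blast
    then show "Inf B \<le> a + e"
      using assms(1,2) by (meson bdd_below_mono cInf_lower2)
  qed
  then have "Inf B \<le> Inf A"
    using False by (intro cInf_greatest) auto
  moreover have "Inf A \<le> Inf B"
    by (rule cInf_superset_mono[OF \<open>B \<noteq> {}\<close> assms(2,1)])
  ultimately show ?thesis
    by simp
qed (use assms(1) in simp)

lemma Inf_dual_feasible_eq:
  fixes G :: "real^'n::finite^'m::finite" and H :: "real^'n^'q::finite" and what :: "'k::finite \<Rightarrow> real^'n"
  assumes nrm: "is_norm nrm" and W: "W = {w. \<forall>r. (H *v w) $ r \<le> h $ r}" "bounded W" "\<And>i. what i \<in> W"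
    and \<theta>: "0 < \<theta>"
  shows "Inf {lam * \<theta> + sample_average s | lam s \<rho> \<gamma> \<eta> \<zeta>.
      \<forall>i. dual_feasible nrm G g H h y z (what i) lam (s i) (\<rho> i) (\<gamma> i) (\<eta> i) (\<zeta> i)}
    = Inf {lam * \<theta> + sample_average s | lam s.
      0 \<le> lam \<and> (\<forall>i. \<forall>w\<in>W. piecewise_affine_loss G g y z w - lam * nrm (w - what i) \<le> s i)}"
    (is "Inf ?Y = Inf ?D")
proof (rule cInf_eq_if_approximating_subset)
  show "?Y \<subseteq> ?D"
  proof
    fix v assume "v \<in> ?Y"
    then obtain lam s \<rho> \<gamma> \<eta> \<zeta> where v: "v = lam * \<theta> + sample_average s"
      and feasible: "\<And>i. dual_feasible nrm G g H h y z (what i) lam (s i) (\<rho> i) (\<gamma> i) (\<eta> i) (\<zeta> i)"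
      by blast
    have "0 \<le> lam"
      by (rule dual_feasible_imp_nonneg[OF nrm feasible])
    moreover have "\<forall>i. \<forall>w\<in>W. piecewise_affine_loss G g y z w - lam * nrm (w - what i) \<le> s i"
      using dual_feasible_imp_loss_bound[OF nrm feasible] unfolding W(1) by blast
    ultimately show "v \<in> ?D"
      unfolding v by blast
  qed
  show "bdd_below ?D"
  proof (rule bdd_belowI[where m = 0])
    fix v assume "v \<in> ?D"
    then obtain lam s where v: "v = lam * \<theta> + sample_average s" and lam: "0 \<le> lam"
      and s: "\<And>i. \<forall>w\<in>W. piecewise_affine_loss G g y z w - lam * nrm (w - what i) \<le> s i"
      by blast
    have "0 \<le> s i" for i
      using bspec[OF s[of i] W(3)[of i]] by (simp add: piecewise_affine_loss_def is_norm_zero[OF nrm])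
    then show "0 \<le> v"
      using lam \<theta> unfolding v sample_average_def by (simp add: sum_nonneg)
  qed
next
  fix a e :: real
  assume "a \<in> ?D" and e: "0 < e"
  then obtain lam s where a: "a = lam * \<theta> + sample_average s" and lam: "0 \<le> lam"
    and s: "\<And>i w. w \<in> W \<Longrightarrow> piecewise_affine_loss G g y z w - lam * nrm (w - what i) \<le> s i"
    by blast
  define \<epsilon> where "\<epsilon> = e / (\<theta> + 1)"
  have \<epsilon>: "0 < \<epsilon>"
    using e \<theta> unfolding \<epsilon>_def by simp
  obtain \<rho> \<gamma> \<eta> \<zeta> where
    "\<And>i. dual_feasible nrm G g H h y z (what i) (lam + \<epsilon>) (s i + \<epsilon>) (\<rho> i) (\<gamma> i) (\<eta> i) (\<zeta> i)"
    using loss_bound_imp_dual_feasible[where what = what, OF nrm W lam \<epsilon> s] by blast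
  then have "(lam + \<epsilon>) * \<theta> + sample_average (\<lambda>i. s i + \<epsilon>) \<in> ?Y"
    by (intro CollectI exI[of _ "lam + \<epsilon>"] exI[of _ "\<lambda>i. s i + \<epsilon>"] exI[of _ \<rho>] exI[of _ \<gamma>]
        exI[of _ \<eta>] exI[of _ \<zeta>]) simp
  moreover have "(lam + \<epsilon>) * \<theta> + sample_average (\<lambda>i. s i + \<epsilon>) = a + e"
  proof -
    have "\<epsilon> * (\<theta> + 1) = e"
      using \<theta> unfolding \<epsilon>_def by simp
    then show ?thesis
      unfolding a sample_average_add_const by (simp add: algebra_simps)
  qed
  ultimately show "\<exists>b\<in>?Y. b \<le> a + e"
    by (intro bexI[where x = "(lam + \<epsilon>) * \<theta> + sample_average (\<lambda>i. s i + \<epsilon>)"]) simp_all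
qed

theorem proposition1:
  fixes c :: "'m::finite \<Rightarrow> real^'n::finite"
    and d :: "'m \<Rightarrow> real"
    and G :: "real^'n^'m" and g :: "real^'m"
    and H :: "real^'n^'q::finite" and h :: "real^'q"
    and W :: "(real^'n) set"
    and what :: "'k::finite \<Rightarrow> real^'n"
    and nrm :: "real^'n \<Rightarrow> real"
    and \<theta> :: real and y :: "real^'n" and z :: real
  assumes nrm: "is_norm nrm"
    and c_nz: "\<And>j. c j \<noteq> 0"
    and G_def: "G = (\<chi> j. - (1 / norm (c j)) *\<^sub>R c j)"
    and g_def: "g = (\<chi> j. d j / norm (c j))"
    and W_def: "W = {w. \<forall>r. (H *v w) $ r \<le> h $ r}"
    and W_ne: "W \<noteq> {}" and W_compact: "compact W"
    and what_in: "\<And>i. what i \<in> W"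
    and theta_pos: "\<theta> > 0"
  shows
   "(SUP \<mu>\<in>{\<mu>\<in>prob_measures_on W. wasserstein nrm \<mu> (empirical_measure what) \<le> ennreal \<theta>}.
        integral\<^sup>L \<mu> (\<lambda>w. max (max ((MIN j. (d j - inner (c j) (y - w)) / norm (c j)) - z) (- z)) 0))
    = Inf {lam * \<theta> + (1 / real CARD('k)) * (\<Sum>i\<in>UNIV. s i) | lam s \<rho> \<gamma> \<eta> \<zeta>.
        (\<forall>i::'k. inner (\<rho> i) (G *v (y - what i) + g) + inner (\<gamma> i) (h - H *v what i) \<le> s i + z
          \<and> inner (\<eta> i) (h - H *v what i) \<le> s i + z
          \<and> inner (\<zeta> i) (h - H *v what i) \<le> s i
          \<and> dual_norm nrm (transpose H *v \<gamma> i + transpose G *v \<rho> i) \<le> lam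
          \<and> dual_norm nrm (transpose H *v \<eta> i) \<le> lam
          \<and> dual_norm nrm (transpose H *v \<zeta> i) \<le> lam
          \<and> inner (\<rho> i) (\<chi> j. 1) = 1
          \<and> (\<forall>r. 0 \<le> \<gamma> i $ r) \<and> (\<forall>j. 0 \<le> (\<rho> i :: real^'m) $ j)
          \<and> (\<forall>r. 0 \<le> \<eta> i $ r) \<and> (\<forall>r. 0 \<le> (\<zeta> i :: real^'q) $ r))}"
proof -
  have loss: "(\<lambda>w. max (max ((MIN j. (d j - inner (c j) (y - w)) / norm (c j)) - z) (- z)) 0)
    = piecewise_affine_loss G g y z"
  proof
    fix w :: "real^'n"
    have "(d j - inner (c j) (y - w)) / norm (c j) = (G *v (y - w) + g) $ j" for j
      unfolding G_def g_def
      by (simp add: matrix_vector_mult_def inner_vec_def sum_negf sum_divide_distrib[symmetric] diff_divide_distrib)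
    then show "max (max ((MIN j. (d j - inner (c j) (y - w)) / norm (c j)) - z) (- z)) 0
      = piecewise_affine_loss G g y z w"
      unfolding piecewise_affine_loss_def by simp
  qed
  have "bounded W"
    using W_compact by (rule compact_imp_bounded)
  show ?thesis
    unfolding loss wasserstein_dro_duality[OF nrm W_compact what_in theta_pos continuous_on_piecewise_affine_loss]
      Inf_dual_feasible_eq[OF nrm W_def \<open>bounded W\<close> what_in theta_pos, symmetric]
    unfolding dual_feasible_def sample_average_def ..
qed

end
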